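(* In the standing setting below, let $x'\in\mathbb{X}$, $y_0,y_1\in\mathbb{Y}$ with $y_0\ne y_1$, $f_i(x)=-c(x,y_i)+c(x',y_i)$ for $i=0,1$, and $S=\{x\in\mathbb{X}: f_0(x)\le f_1(x)\}$. Then the interior of $S$ is contained in $\{x\in\mathbb{X}: f_0(x)<f_1(x)\}$, and the boundary $\partial S$ contains $\{x\in\mathbb{X}: f_0(x)=f_1(x)\}$.
   Context: Standing setting: $\mathbb{X},\mathbb{Y}\subset\mathbb{R}^n$ are compact with non-empty interior; $c:\mathbb{X}\times\mathbb{Y}\to\mathbb{R}$ has continuous $D_xc$, $D_yc$, and continuous mixed second derivatives with $D^2_{xy}c=(D^2_{yx}c)^T$; for each $x$ the map $y\mapsto -D_xc(x,y)$ is injective on $\mathbb{Y}$ and for each $y$ the map $x\mapsto -D_yc(x,y)$ is injective on $\mathbb{X}$; $D^2_{xy}c(x,y)$ is invertible everywhere; for every $y$ the set $\{-D_yc(x,y):x\in\mathbb{X}\}$ is convex and for every $x$ the set $\{-D_xc(x,y):y\in\mathbb{Y}\}$ is convex. Interior and boundary are taken in $\mathbb{R}^n$. *)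

theory Defs
  imports "HOL-Analysis.Analysis"
begin

end

theory Submission
  imports Defs
begin

text \<open>
  At a point of the level set lying in the interior of the sublevel set, the function attains
  a local maximum, so its differential vanishes there. For the cost function this is excluded
  by the twist condition: the differential of \<open>c(\<cdot>, y1) - c(\<cdot>, y0)\<close> is
  \<open>D\<^sub>xc(x, y1) - D\<^sub>xc(x, y0) \<noteq> 0\<close>.
\<close>

lemma interior_sublevel_subset_strict:
  fixes g :: "'a::real_normed_vector \<Rightarrow> real"
  assumes deriv: "\<And>x. x \<in> X \<Longrightarrow> (g has_derivative g' x) (at x within X)"
    and nonzero: "\<And>x. x \<in> X \<Longrightarrow> g' x \<noteq> (\<lambda>h. 0)"
  shows "interior {x \<in> X. g x \<le> a} \<subseteq> {x \<in> X. g x < a}"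
proof
  let ?S = "{x \<in> X. g x \<le> a}"
  fix x assume x_int: "x \<in> interior ?S"
  then have "x \<in> X" "g x \<le> a"
    using interior_subset by blast+
  have "x \<in> interior X"
    using x_int interior_mono[of ?S X] by blast
  then have "(g has_derivative g' x) (at x)"
    using deriv[OF \<open>x \<in> X\<close>] at_within_interior by metis
  show "x \<in> {x \<in> X. g x < a}"
  proof (rule ccontr)
    assume "x \<notin> {x \<in> X. g x < a}"
    then have "\<forall>u \<in> interior ?S. g u \<le> g x"
      using \<open>x \<in> X\<close> \<open>g x \<le> a\<close> interior_subset by fastforce
    then have "g' x = (\<lambda>h. 0)"
      using differential_zero_maxmin[OF x_int open_interior \<open>(g has_derivative g' x) (at x)\<close>]
      by blast
    with nonzero[OF \<open>x \<in> X\<close>] show False ..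
  qed
qed

lemma level_set_subset_frontier_sublevel:
  fixes g :: "'a::real_normed_vector \<Rightarrow> real"
  assumes "\<And>x. x \<in> X \<Longrightarrow> (g has_derivative g' x) (at x within X)"
    and "\<And>x. x \<in> X \<Longrightarrow> g' x \<noteq> (\<lambda>h. 0)"
  shows "{x \<in> X. g x = a} \<subseteq> frontier {x \<in> X. g x \<le> a}"
  using interior_sublevel_subset_strict[OF assms, of a] closure_subset
  by (fastforce simp: frontier_def)

theorem corollary2p20:
  fixes X Y :: "(real ^ 'n) set"
    and c :: "real ^ 'n \<Rightarrow> real ^ 'n \<Rightarrow> real"
    and Dx Dy :: "real ^ 'n \<Rightarrow> real ^ 'n \<Rightarrow> real ^ 'n"
    and Dxy Dyx :: "real ^ 'n \<Rightarrow> real ^ 'n \<Rightarrow> real ^ 'n ^ 'n"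
    and x' y0 y1 :: "real ^ 'n"
  assumes X_compact: "compact X" and X_int: "interior X \<noteq> {}"
    and Y_compact: "compact Y" and Y_int: "interior Y \<noteq> {}"
    and Dx_deriv: "\<And>x y. x \<in> X \<Longrightarrow> y \<in> Y \<Longrightarrow>
        ((\<lambda>u. c u y) has_derivative (\<lambda>h. Dx x y \<bullet> h)) (at x within X)"
    and Dy_deriv: "\<And>x y. x \<in> X \<Longrightarrow> y \<in> Y \<Longrightarrow>
        ((\<lambda>v. c x v) has_derivative (\<lambda>h. Dy x y \<bullet> h)) (at y within Y)"
    and Dx_cont: "continuous_on (X \<times> Y) (\<lambda>(x, y). Dx x y)"
    and Dy_cont: "continuous_on (X \<times> Y) (\<lambda>(x, y). Dy x y)"
    and Dxy_deriv: "\<And>x y. x \<in> X \<Longrightarrow> y \<in> Y \<Longrightarrow>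
        ((\<lambda>v. Dx x v) has_derivative (\<lambda>h. Dxy x y *v h)) (at y within Y)"
    and Dyx_deriv: "\<And>x y. x \<in> X \<Longrightarrow> y \<in> Y \<Longrightarrow>
        ((\<lambda>u. Dy u y) has_derivative (\<lambda>h. Dyx x y *v h)) (at x within X)"
    and Dxy_cont: "continuous_on (X \<times> Y) (\<lambda>(x, y). Dxy x y)"
    and Dyx_cont: "continuous_on (X \<times> Y) (\<lambda>(x, y). Dyx x y)"
    and mixed_sym: "\<And>x y. x \<in> X \<Longrightarrow> y \<in> Y \<Longrightarrow> Dxy x y = transpose (Dyx x y)"
    and twist_x: "\<And>x. x \<in> X \<Longrightarrow> inj_on (\<lambda>y. - Dx x y) Y"
    and twist_y: "\<And>y. y \<in> Y \<Longrightarrow> inj_on (\<lambda>x. - Dy x y) X"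
    and nondeg: "\<And>x y. x \<in> X \<Longrightarrow> y \<in> Y \<Longrightarrow> invertible (Dxy x y)"
    and conv_y: "\<And>y. y \<in> Y \<Longrightarrow> convex ((\<lambda>x. - Dy x y) ` X)"
    and conv_x: "\<And>x. x \<in> X \<Longrightarrow> convex ((\<lambda>y. - Dx x y) ` Y)"
    and x'_in: "x' \<in> X" and y0_in: "y0 \<in> Y" and y1_in: "y1 \<in> Y" and y01: "y0 \<noteq> y1"
  defines "f0 \<equiv> (\<lambda>x. - c x y0 + c x' y0)"
    and "f1 \<equiv> (\<lambda>x. - c x y1 + c x' y1)"
    and "S \<equiv> {x \<in> X. - c x y0 + c x' y0 \<le> - c x y1 + c x' y1}"
  shows "interior S \<subseteq> {x \<in> X. f0 x < f1 x} \<and> {x \<in> X. f0 x = f1 x} \<subseteq> frontier S"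
proof -
  define g where "g u = c u y1 - c u y0" for u
  define g' where "g' x = (\<lambda>h. (Dx x y1 - Dx x y0) \<bullet> h)" for x
  have deriv: "(g has_derivative g' x) (at x within X)" if "x \<in> X" for x
    unfolding g_def g'_def inner_diff_left
    by (intro has_derivative_diff Dx_deriv that y0_in y1_in)
  have nonzero: "g' x \<noteq> (\<lambda>h. 0)" if "x \<in> X" for x
  proof
    assume "g' x = (\<lambda>h. 0)"
    then have "(Dx x y1 - Dx x y0) \<bullet> (Dx x y1 - Dx x y0) = 0"
      unfolding g'_def by metis
    then have "- Dx x y0 = - Dx x y1"
      by simp
    with twist_x[OF that] y0_in y1_in y01 show False
      by (meson inj_onD)
  qed
  have "{x \<in> X. f0 x \<le> f1 x} = {x \<in> X. g x \<le> c x' y1 - c x' y0}"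
    and "{x \<in> X. f0 x < f1 x} = {x \<in> X. g x < c x' y1 - c x' y0}"
    and "{x \<in> X. f0 x = f1 x} = {x \<in> X. g x = c x' y1 - c x' y0}"
    unfolding f0_def f1_def g_def by auto
  moreover have "S = {x \<in> X. f0 x \<le> f1 x}"
    unfolding S_def f0_def f1_def ..
  ultimately show ?thesis
    using interior_sublevel_subset_strict[OF deriv nonzero]
      level_set_subset_frontier_sublevel[OF deriv nonzero]
    by simp
qed

end
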